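(* Let $p,q\in\mathbb{H}^2$ with $\mathbb{H}^2=p\mathbb{H}\oplus q\mathbb{H}$, let $S$ be the round two-sphere $\{[px+q]:x\in\mathbb{C}\}\cup\{[p]\}\cong\mathbb{C}\cup\{\infty\}$, so that the circle through $[p],[q],[r]$, $r=p+q$, is $\{[px+q]:x\in\mathbb{R}\}\cup\{[p]\}$. Let $C_r=\mathbb{P}(\mathrm{span}\{p\wedge pj,q\wedge qj,r\wedge rj\})\cap Q^4$. Then every point of $C_r$ corresponds either to a point of this circle (including $\infty=[p]$), or to a two-sphere in $\mathbb{HP}^1$ which half-touches $S$ (in these coordinates) at a pair of points $z,\bar z$ of $\mathbb{C}$, i.e. at $[pz+q]$ and $[p\bar z+q]$.
   Context: $\mathbb{H}$ denotes the quaternions, $\mathbb{C}=\mathrm{span}_{\mathbb{R}}\{1,i\}$, $zj=j\bar z$ for $z\in\mathbb{C}$; $\mathbb{H}^2$ is a right $\mathbb{H}$-vector space identified with $\mathbb{C}^4$; $\mathbb{HP}^1=\{v\mathbb{H}\}\cong S^4$; $\mathbb{CP}^3=\mathbb{P}(\mathbb{C}^4)$; the twistor fibre over $v\mathbb{H}$ is the line through $[v],[vj]$. $Q^4=\{[\alpha]\in\mathbb{P}(\Lambda^2\mathbb{C}^4):\alpha\wedge\alpha=0\}$, $[v\wedge w]$ identified with the line through $[v],[w]$. The antilinear extension of $v\wedge w\mapsto vj\wedge wj$ gives a real structure $j$ on $Q^4$ whose real points $[v\wedge vj]$ are identified with points $v\mathbb{H}$ of $S^4$; a non-real point is the twistor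 lift of a round two-sphere with conformal structure (its image under $v\mathbb{C}\mapsto v\mathbb{H}$). The twistor lift of $S$ (with the conformal structure in which $x\in\mathbb{C}$ is a holomorphic coordinate) is the line through $[p],[q]$. A null line is a projective line contained in $Q^4$; two distinct two-spheres half-touch if they span a null line containing no real point; they then meet in exactly two points of $S^4$, at which they are said to half-touch. *)

theory Defs
  imports "HOL-Analysis.Analysis"
begin

text \<open>A quaternion is written a + j b with a, b complex, so that right
multiplication by a complex number z is (a,b) -> (a z, b z) (complex linear).
H^2 is thus identified with C^4 via (a1 + j b1, a2 + j b2) -> (a1,b1,a2,b2),
right multiplication by complex scalars is the usual complex scalar
multiplication, and right multiplication by j is the antilinear map
(a1,b1,a2,b2) -> (-cnj b1, cnj a1, -cnj b2, cnj a2).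
Bivectors in Lambda^2 C^4 are represented as antisymmetric 4x4 complex
matrices, v wedge w = v w^T - w v^T.\<close>

type_synonym cvec = "complex ^ 4"
type_synonym bivec = "complex ^ 4 ^ 4"

definition jperm :: "4 \<Rightarrow> 4" where
  "jperm i = (if i = 1 then 2 else if i = 2 then 1 else if i = 3 then 4 else 3)"

definition jsgn :: "4 \<Rightarrow> complex" where
  "jsgn i = (if i = 1 \<or> i = 3 then -1 else 1)"

definition jv :: "cvec \<Rightarrow> cvec" where
  "jv v = (\<chi> i. jsgn i * cnj (v $ jperm i))"

text \<open>the quaternionic line vH, as a subset of C^4 (= C-span of v and vj)\<close>
definition hline :: "cvec \<Rightarrow> cvec set" where
  "hline v = {a *s v + b *s jv v | a b. True}"

definition wedge :: "cvec \<Rightarrow> cvec \<Rightarrow> bivec" where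
  "wedge v w = (\<chi> i k. v $ i * w $ k - w $ i * v $ k)"

definition bsc :: "complex \<Rightarrow> bivec \<Rightarrow> bivec" where
  "bsc c A = (\<chi> i k. c * A $ i $ k)"

text \<open>alpha wedge alpha = 0 (Pfaffian), i.e. the Klein quadric condition\<close>
definition pf :: "bivec \<Rightarrow> complex" where
  "pf A = A $ 1 $ 2 * A $ 3 $ 4 - A $ 1 $ 3 * A $ 2 $ 4 + A $ 1 $ 4 * A $ 2 $ 3"

definition inQ :: "bivec \<Rightarrow> bool" where
  "inQ A \<longleftrightarrow> A \<noteq> 0 \<and> pf A = 0"

text \<open>the antilinear real structure: extension of v wedge w -> vj wedge wj\<close>
definition Jb :: "bivec \<Rightarrow> bivec" where
  "Jb A = (\<chi> i k. jsgn i * jsgn k * cnj (A $ jperm i $ jperm k))"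

definition realpt :: "bivec \<Rightarrow> bool" where
  "realpt A \<longleftrightarrow> A \<noteq> 0 \<and> (\<exists>c. Jb A = bsc c A)"

definition distinct_pts :: "bivec \<Rightarrow> bivec \<Rightarrow> bool" where
  "distinct_pts A B \<longleftrightarrow> A \<noteq> 0 \<and> B \<noteq> 0 \<and> (\<forall>c. A \<noteq> bsc c B)"

definition null_line :: "bivec \<Rightarrow> bivec \<Rightarrow> bool" where
  "null_line A B \<longleftrightarrow> (\<forall>a b. pf (bsc a A + bsc b B) = 0)"

definition half_touch :: "bivec \<Rightarrow> bivec \<Rightarrow> bool" where
  "half_touch A B \<longleftrightarrow> inQ A \<and> inQ B \<and> \<not> realpt A \<and> \<not> realpt B \<and>
     distinct_pts A B \<and> null_line A B \<and>
     (\<forall>a b. bsc a A + bsc b B \<noteq> 0 \<longrightarrow> \<not> realpt (bsc a A + bsc b B))"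

text \<open>the subset of HP^1 = S^4 (points given as quaternionic lines) that is the
image of the projective line in CP^3 corresponding to [A] in Q^4\<close>
definition sph :: "bivec \<Rightarrow> cvec set set" where
  "sph A = {hline v | v. v \<noteq> 0 \<and> (\<exists>w. A = wedge v w)}"

end

theory Submission
  imports Defs
begin

text \<open>Write P, Q, R for the real points p \<and> pj, q \<and> qj, r \<and> rj. Their mutual
pairings under the polarized Klein form all equal the volume of the complex frame
p, pj, q, qj, so A = aP + bQ + cR lies on Q^4 iff ab + bc + ca = 0. If c = 0, then A is a
multiple of P or of Q. Otherwise A = (b + c) u \<and> u'j with t = (a + c)/c, u = tp + q and
u' = conj(t) p + q; for real t this is the real point of the circle point [u]. For
non-real t, pairing A and p \<and> q with their images under the real structure shows
that they span a null line without real points. The twistor line of A contains u and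
u'j, that of S contains u and u', so the two spheres meet exactly in the quaternionic
lines of u and u'.\<close>

lemma vec4_eq_iff: "(x::'a^4) = y \<longleftrightarrow> x$1 = y$1 \<and> x$2 = y$2 \<and> x$3 = y$3 \<and> x$4 = y$4"
  unfolding vec_eq_iff forall_4 ..

lemma jperm_simps: "jperm 1 = 2" "jperm 2 = 1" "jperm 3 = 4" "jperm 4 = 3"
  by (simp_all add: jperm_def)

lemma jsgn_simps: "jsgn 1 = -1" "jsgn 2 = 1" "jsgn 3 = -1" "jsgn 4 = 1"
  by (simp_all add: jsgn_def)

text \<open>The polarization of the Pfaffian: X \<and> Y = pf_polar X Y \<cdot> e1 \<and> e2 \<and> e3 \<and> e4.\<close>
definition pf_polar :: "bivec \<Rightarrow> bivec \<Rightarrow> complex" where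
  "pf_polar X Y = X$1$2 * Y$3$4 + X$3$4 * Y$1$2 - X$1$3 * Y$2$4 - X$2$4 * Y$1$3
     + X$1$4 * Y$2$3 + X$2$3 * Y$1$4"

text \<open>The determinant of the matrix with columns a, b, c, d.\<close>
definition vol :: "cvec \<Rightarrow> cvec \<Rightarrow> cvec \<Rightarrow> cvec \<Rightarrow> complex" where
  "vol a b c d = pf_polar (wedge a b) (wedge c d)"

lemma pf_add: "pf (X + Y) = pf X + pf Y + pf_polar X Y"
  by (simp add: pf_def pf_polar_def algebra_simps)

lemma pf_bsc: "pf (bsc c X) = c\<^sup>2 * pf X"
  by (simp add: pf_def bsc_def algebra_simps power2_eq_square)

lemma pf_wedge: "pf (wedge v w) = 0"
  by (simp add: pf_def wedge_def algebra_simps)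

lemma pf_polar_add_left: "pf_polar (X + Y) Z = pf_polar X Z + pf_polar Y Z"
  by (simp add: pf_polar_def algebra_simps)

lemma pf_polar_add_right: "pf_polar Z (X + Y) = pf_polar Z X + pf_polar Z Y"
  by (simp add: pf_polar_def algebra_simps)

lemma pf_polar_bsc_left: "pf_polar (bsc c X) Z = c * pf_polar X Z"
  by (simp add: pf_polar_def bsc_def algebra_simps)

lemma pf_polar_bsc_right: "pf_polar Z (bsc c X) = c * pf_polar Z X"
  by (simp add: pf_polar_def bsc_def algebra_simps)

lemma pf_polar_self: "pf_polar X X = 2 * pf X"
  by (simp add: pf_polar_def pf_def algebra_simps)

lemma wedge_add_left: "wedge (x + y) z = wedge x z + wedge y z"
  by (simp add: vec_eq_iff wedge_def algebra_simps)

lemma wedge_add_right: "wedge z (x + y) = wedge z x + wedge z y"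
  by (simp add: vec_eq_iff wedge_def algebra_simps)

lemma wedge_scale_left: "wedge (c *s x) y = bsc c (wedge x y)"
  by (simp add: vec_eq_iff wedge_def bsc_def algebra_simps)

lemma wedge_scale_right: "wedge y (c *s x) = bsc c (wedge y x)"
  by (simp add: vec_eq_iff wedge_def bsc_def algebra_simps)

lemma wedge_zero: "wedge 0 x = 0" "wedge x 0 = 0"
  by (simp_all add: vec_eq_iff wedge_def)

lemma bsc_zero: "bsc 0 X = 0" "bsc c 0 = 0"
  by (simp_all add: vec_eq_iff bsc_def)

lemma bsc_one: "bsc 1 X = X"
  by (simp add: vec_eq_iff bsc_def)

lemma bsc_add: "bsc c (X + Y) = bsc c X + bsc c Y"
  by (simp add: vec_eq_iff bsc_def algebra_simps)

lemma bsc_bsc: "bsc c (bsc d X) = bsc (c * d) X"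
  by (simp add: vec_eq_iff bsc_def)

lemma jv_add: "jv (x + y) = jv x + jv y"
  by (simp add: vec_eq_iff jv_def algebra_simps)

lemma jv_scale: "jv (c *s x) = cnj c *s jv x"
  by (simp add: vec_eq_iff jv_def)

lemma jv_jv: "jv (jv x) = - x"
  unfolding vec4_eq_iff jv_def by (simp add: jperm_simps jsgn_simps)

lemma jv_zero: "jv 0 = 0"
  by (simp add: vec_eq_iff jv_def)

lemma Jb_add: "Jb (X + Y) = Jb X + Jb Y"
  by (simp add: vec_eq_iff Jb_def algebra_simps)

lemma Jb_bsc: "Jb (bsc c X) = bsc (cnj c) (Jb X)"
  by (simp add: vec_eq_iff Jb_def bsc_def algebra_simps)

lemma Jb_wedge: "Jb (wedge v w) = wedge (jv v) (jv w)"
  by (simp add: vec_eq_iff Jb_def wedge_def jv_def algebra_simps)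

lemma vol_add:
  "vol (x + y) b c d = vol x b c d + vol y b c d"
  "vol a (x + y) c d = vol a x c d + vol a y c d"
  "vol a b (x + y) d = vol a b x d + vol a b y d"
  "vol a b c (x + y) = vol a b c x + vol a b c y"
  by (simp_all add: vol_def wedge_add_left wedge_add_right pf_polar_add_left pf_polar_add_right)

lemma vol_scale:
  "vol (k *s x) b c d = k * vol x b c d"
  "vol a (k *s x) c d = k * vol a x c d"
  "vol a b (k *s x) d = k * vol a b x d"
  "vol a b c (k *s x) = k * vol a b c x"
  by (simp_all add: vol_def wedge_scale_left wedge_scale_right pf_polar_bsc_left pf_polar_bsc_right)

lemma vol_alternating:
  "vol x x c d = 0" "vol x b x d = 0" "vol x b c x = 0"
  "vol a x x d = 0" "vol a x c x = 0" "vol a b x x = 0"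
  by (simp_all add: vol_def pf_polar_def wedge_def algebra_simps)

lemma vol_permute:
  "vol a b d c = - vol a b c d" "vol a c b d = - vol a b c d" "vol a c d b = vol a b c d"
  "vol a d b c = vol a b c d" "vol a d c b = - vol a b c d" "vol b a c d = - vol a b c d"
  "vol b a d c = vol a b c d" "vol b c a d = vol a b c d" "vol b c d a = - vol a b c d"
  "vol b d a c = - vol a b c d" "vol b d c a = vol a b c d" "vol c a b d = vol a b c d"
  "vol c a d b = - vol a b c d" "vol c b a d = - vol a b c d" "vol c b d a = vol a b c d"
  "vol c d a b = vol a b c d" "vol c d b a = - vol a b c d" "vol d a b c = - vol a b c d"
  "vol d a c b = vol a b c d" "vol d b a c = vol a b c d" "vol d b c a = - vol a b c d"
  "vol d c a b = - vol a b c d" "vol d c b a = vol a b c d"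
  by (simp_all add: vol_def pf_polar_def wedge_def algebra_simps)

definition det4 :: "complex \<Rightarrow> complex \<Rightarrow> complex \<Rightarrow> complex \<Rightarrow> complex \<Rightarrow> complex \<Rightarrow> complex \<Rightarrow> complex
    \<Rightarrow> complex \<Rightarrow> complex \<Rightarrow> complex \<Rightarrow> complex \<Rightarrow> complex \<Rightarrow> complex \<Rightarrow> complex \<Rightarrow> complex \<Rightarrow> complex" where
  "det4 a1 a2 a3 a4 b1 b2 b3 b4 c1 c2 c3 c4 d1 d2 d3 d4 =
     a1*b2*c3*d4 - a1*b2*c4*d3 - a1*b3*c2*d4 + a1*b3*c4*d2 + a1*b4*c2*d3 - a1*b4*c3*d2
   - a2*b1*c3*d4 + a2*b1*c4*d3 + a2*b3*c1*d4 - a2*b3*c4*d1 - a2*b4*c1*d3 + a2*b4*c3*d1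
   + a3*b1*c2*d4 - a3*b1*c4*d2 - a3*b2*c1*d4 + a3*b2*c4*d1 + a3*b4*c1*d2 - a3*b4*c2*d1
   - a4*b1*c2*d3 + a4*b1*c3*d2 + a4*b2*c1*d3 - a4*b2*c3*d1 - a4*b3*c1*d2 + a4*b3*c2*d1"

lemma vol_lincomb:
  "vol (a1 *s e1 + a2 *s e2 + a3 *s e3 + a4 *s e4) (b1 *s e1 + b2 *s e2 + b3 *s e3 + b4 *s e4)
       (c1 *s e1 + c2 *s e2 + c3 *s e3 + c4 *s e4) (d1 *s e1 + d2 *s e2 + d3 *s e3 + d4 *s e4)
   = det4 a1 a2 a3 a4 b1 b2 b3 b4 c1 c2 c3 c4 d1 d2 d3 d4 * vol e1 e2 e3 e4"
  unfolding det4_def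
  by (simp only: vol_add vol_scale vol_alternating vol_permute[where a=e1 and b=e2 and c=e3 and d=e4]) (simp add: algebra_simps)

definition qcoord :: "cvec \<Rightarrow> cvec \<Rightarrow> complex \<Rightarrow> complex \<Rightarrow> complex \<Rightarrow> complex \<Rightarrow> cvec" where
  "qcoord p q x1 x2 x3 x4 = x1 *s p + x2 *s jv p + x3 *s q + x4 *s jv q"

lemma vol_qcoord:
  "vol (qcoord p q a1 a2 a3 a4) (qcoord p q b1 b2 b3 b4) (qcoord p q c1 c2 c3 c4) (qcoord p q d1 d2 d3 d4)
   = det4 a1 a2 a3 a4 b1 b2 b3 b4 c1 c2 c3 c4 d1 d2 d3 d4 * vol p (jv p) q (jv q)"
  unfolding qcoord_def by (rule vol_lincomb)

lemma jv_qcoord: "jv (qcoord p q x1 x2 x3 x4) = qcoord p q (- cnj x2) (cnj x1) (- cnj x4) (cnj x3)"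
  unfolding qcoord_def vec4_eq_iff jv_def by (simp add: jperm_simps jsgn_simps algebra_simps)

lemma qcoord_basis:
  "qcoord p q 1 0 0 0 = p" "qcoord p q 0 1 0 0 = jv p" "qcoord p q 0 0 1 0 = q" "qcoord p q 0 0 0 1 = jv q"
  by (simp_all add: qcoord_def vec_eq_iff)

lemma pf_circle_pencil:
  "pf (bsc a (wedge p (jv p)) + bsc b (wedge q (jv q)) + bsc c (wedge (p + q) (jv (p + q))))
   = (a * b + a * c + b * c) * vol p (jv p) q (jv q)"
  by (simp add: pf_add pf_bsc pf_wedge pf_polar_add_left pf_polar_add_right pf_polar_bsc_left
      pf_polar_bsc_right vol_def[symmetric] jv_add vol_add vol_alternating
      vol_permute[where a=p and b="jv p" and c=q and d="jv q"] algebra_simps)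

lemma circle_pencil_factor:
  assumes "a * b + a * c + b * c = 0" and "c \<noteq> 0" and "c * t = a + c"
  shows "bsc a (wedge p (jv p)) + bsc b (wedge q (jv q)) + bsc c (wedge (p + q) (jv (p + q)))
       = bsc (b + c) (wedge (t *s p + q) (jv (cnj t *s p + q)))"
proof -
  define \<beta> where "\<beta> = b + c"
  have "c * (\<beta> * t) = c * c"
    using assms(1,3) unfolding \<beta>_def by (simp add: algebra_simps)
  then have c: "c = \<beta> * t"
    using assms(2) by simp
  then have a: "a = \<beta> * t * t - \<beta> * t"
    using assms(3) by (metis add_diff_cancel mult.commute)
  have b: "b = \<beta> - \<beta> * t"
    using c unfolding \<beta>_def by simp
  show ?thesis
    unfolding \<beta>_def[symmetric] unfolding a b c
    by (simp add: vec_eq_iff wedge_def bsc_def jv_add jv_scale algebra_simps)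
qed

lemma circle_pencil_on_quadric:
  assumes "a * b + a * c + b * c = 0"
  shows "(\<exists>\<beta> t. bsc a (wedge p (jv p)) + bsc b (wedge q (jv q)) + bsc c (wedge (p + q) (jv (p + q)))
            = bsc \<beta> (wedge (t *s p + q) (jv (cnj t *s p + q))))
       \<or> bsc a (wedge p (jv p)) + bsc b (wedge q (jv q)) + bsc c (wedge (p + q) (jv (p + q)))
            = bsc a (wedge p (jv p))"
proof (cases "c = 0")
  case True
  then consider "a = 0" | "b = 0"
    using assms by auto
  then show ?thesis
  proof cases
    case 1
    show ?thesis
      by (intro disjI1 exI[of _ b] exI[of _ 0]) (simp add: 1 True bsc_zero)
  next
    case 2
    show ?thesis
      by (intro disjI2) (simp add: 2 True bsc_zero)
  qed
next
  case False
  then have "c * ((a + c) / c) = a + c"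
    by simp
  then show ?thesis
    using circle_pencil_factor[OF assms False] by blast
qed

lemma mem_hline: "x \<in> hline v \<longleftrightarrow> (\<exists>a b. x = a *s v + b *s jv v)"
  unfolding hline_def by blast

lemma hline_subset:
  assumes "w \<in> hline v"
  shows "hline w \<subseteq> hline v"
proof
  fix x
  assume "x \<in> hline w"
  then obtain c d where x: "x = c *s w + d *s jv w"
    unfolding mem_hline by blast
  obtain a b where w: "w = a *s v + b *s jv v"
    using assms unfolding mem_hline by blast
  have "x = (c * a - d * cnj b) *s v + (c * b + d * cnj a) *s jv v"
    unfolding x w by (simp add: jv_add jv_scale jv_jv vec_eq_iff algebra_simps)
  then show "x \<in> hline v"
    unfolding mem_hline by blast
qed

lemma hline_eqI: "w \<in> hline v \<Longrightarrow> v \<in> hline w \<Longrightarrow> hline w = hline v"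
  by (simp add: hline_subset subset_antisym)

lemma hline_scale:
  assumes "k \<noteq> 0"
  shows "hline (k *s v) = hline v"
proof (rule hline_eqI)
  show "k *s v \<in> hline v"
    unfolding mem_hline by (intro exI[of _ k] exI[of _ 0]) simp
  show "v \<in> hline (k *s v)"
    unfolding mem_hline using assms by (intro exI[of _ "1 / k"] exI[of _ 0]) simp
qed

lemma hline_jv: "hline (jv v) = hline v"
proof (rule hline_eqI)
  show "jv v \<in> hline v"
    unfolding mem_hline by (intro exI[of _ 0] exI[of _ 1]) simp
  show "v \<in> hline (jv v)"
    unfolding mem_hline by (intro exI[of _ 0] exI[of _ "- 1"]) (simp add: jv_jv)
qed

lemma self_in_hline: "v \<in> hline v"
  unfolding mem_hline by (intro exI[of _ 1] exI[of _ 0]) simp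

lemma hline_in_sph: "v \<noteq> 0 \<Longrightarrow> hline v \<in> sph (wedge v w)"
  unfolding sph_def by blast

text \<open>Cramer's rule on a non-vanishing Pluecker coordinate M i k of M = x \<and> y; the
other coordinates of v follow from the identity (v \<and> w) \<and> v = 0.\<close>
lemma wedge_eq_in_span:
  assumes eq: "wedge v w = wedge x y" and nz: "wedge x y \<noteq> 0"
  shows "\<exists>\<alpha> \<beta>. v = \<alpha> *s x + \<beta> *s y"
proof -
  define M where "M = wedge x y"
  obtain i k where Mik: "M $ i $ k \<noteq> 0"
    using nz unfolding M_def vec_eq_iff by auto
  have M: "M $ i' $ k' = x $ i' * y $ k' - y $ i' * x $ k'" for i' k'
    unfolding M_def wedge_def by simp
  have vM: "v $ l * M $ i $ k = v $ k * M $ i $ l - v $ i * M $ k $ l" for l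
    unfolding M_def eq[symmetric] by (simp add: wedge_def algebra_simps)
  define \<alpha> where "\<alpha> = (v $ i * y $ k - v $ k * y $ i) / M $ i $ k"
  define \<beta> where "\<beta> = (x $ i * v $ k - x $ k * v $ i) / M $ i $ k"
  have \<alpha>: "\<alpha> * M $ i $ k = v $ i * y $ k - v $ k * y $ i"
    and \<beta>: "\<beta> * M $ i $ k = x $ i * v $ k - x $ k * v $ i"
    using Mik by (simp_all add: \<alpha>_def \<beta>_def)
  have "v $ l = \<alpha> * x $ l + \<beta> * y $ l" for l
  proof -
    have "(\<alpha> * x $ l + \<beta> * y $ l) * M $ i $ k = v $ k * M $ i $ l - v $ i * M $ k $ l"
      using \<alpha> \<beta> unfolding M by algebra
    then show ?thesis
      using vM[of l] Mik by (metis mult_right_cancel)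
  qed
  then show ?thesis
    by (auto simp: vec_eq_iff)
qed

lemma mem_sph_wedge:
  assumes "X \<in> sph (wedge x y)" and "wedge x y \<noteq> 0"
  obtains v \<alpha> \<beta> where "v \<noteq> 0" "X = hline v" "v = \<alpha> *s x + \<beta> *s y"
proof -
  obtain v w where "v \<noteq> 0" "X = hline v" "wedge x y = wedge v w"
    using assms(1) unfolding sph_def by blast
  then show ?thesis
    using that wedge_eq_in_span[of v w x y] assms(2) by auto
qed

text \<open>If J(aX + bY) = d(aX + bY), pairing with Y forces b = 0 and then pairing with X
forces a = 0.\<close>
lemma half_touch_if_pairings:
  assumes pfX: "pf X = 0" and pfY: "pf Y = 0" and XY: "pf_polar X Y = 0"
    and JXY: "pf_polar (Jb X) Y = 0"
    and JXX: "pf_polar (Jb X) X \<noteq> 0" and JYY: "pf_polar (Jb Y) Y \<noteq> 0"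
  shows "half_touch X Y"
proof -
  have XX: "pf_polar X X = 0" and YY: "pf_polar Y Y = 0"
    by (simp_all add: pf_polar_self pfX pfY)
  have X0: "X \<noteq> 0" and Y0: "Y \<noteq> 0"
    using JXX JYY by (auto simp: pf_polar_def)
  have no_real: "\<not> realpt (bsc a X + bsc b Y)" if nz: "bsc a X + bsc b Y \<noteq> 0" for a b
  proof
    assume "realpt (bsc a X + bsc b Y)"
    then obtain d where J: "bsc (cnj a) (Jb X) + bsc (cnj b) (Jb Y) = bsc d (bsc a X + bsc b Y)"
      unfolding realpt_def by (auto simp: Jb_add Jb_bsc)
    have "cnj b * pf_polar (Jb Y) Y = 0"
      using arg_cong[OF J, of "\<lambda>Z. pf_polar Z Y"]
      by (simp add: pf_polar_add_left pf_polar_bsc_left bsc_add bsc_bsc JXY XY YY)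
    then have b: "b = 0"
      using JYY by simp
    have "cnj a * pf_polar (Jb X) X = 0"
      using arg_cong[OF J, of "\<lambda>Z. pf_polar Z X"]
      by (simp add: b pf_polar_add_left pf_polar_bsc_left bsc_zero bsc_bsc XX)
    then have "a = 0"
      using JXX by simp
    then show False
      using nz b by (simp add: bsc_zero)
  qed
  have distinct: "X \<noteq> bsc c Y" for c
  proof
    assume "X = bsc c Y"
    then have "cnj c * pf_polar (Jb Y) Y = 0"
      using JXY by (simp add: Jb_bsc pf_polar_bsc_left)
    then show False
      using \<open>X = bsc c Y\<close> X0 JYY by (simp add: bsc_zero)
  qed
  show ?thesis
    unfolding half_touch_def
  proof (intro conjI allI impI)
    show "inQ X" "inQ Y"
      using X0 Y0 pfX pfY by (simp_all add: inQ_def)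
    show "\<not> realpt X"
      using no_real[of 1 0] X0 by (simp add: bsc_one bsc_zero)
    show "\<not> realpt Y"
      using no_real[of 0 1] Y0 by (simp add: bsc_one bsc_zero)
    show "distinct_pts X Y"
      using distinct X0 Y0 by (simp add: distinct_pts_def)
    show "null_line X Y"
      by (simp add: null_line_def pf_add pf_bsc pf_polar_bsc_left pf_polar_bsc_right pfX pfY XY)
    fix a b
    assume "bsc a X + bsc b Y \<noteq> 0"
    then show "\<not> realpt (bsc a X + bsc b Y)"
      by (rule no_real)
  qed
qed

lemma pf_polar_Jb_wedge_self: "pf_polar (Jb (wedge a b)) (wedge a b) = - vol a (jv a) b (jv b)"
  unfolding Jb_wedge vol_def by (simp add: pf_polar_def wedge_def algebra_simps)

lemma nonreal_pencil_pairings: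
  fixes t :: complex and p q :: cvec
  defines "W \<equiv> wedge (t *s p + q) (jv (cnj t *s p + q))"
  shows "pf_polar W (wedge p q) = 0"
    and "pf_polar (Jb W) (wedge p q) = 0"
    and "pf_polar (Jb W) W = (t - cnj t)\<^sup>2 * vol p (jv p) q (jv q)"
proof -
  have W: "W = wedge (qcoord p q t 0 1 0) (qcoord p q 0 t 0 1)"
    unfolding W_def by (simp add: qcoord_def jv_add jv_scale)
  have pq: "wedge p q = wedge (qcoord p q 1 0 0 0) (qcoord p q 0 0 1 0)"
    by (simp add: qcoord_basis)
  show "pf_polar W (wedge p q) = 0" "pf_polar (Jb W) (wedge p q) = 0"
    "pf_polar (Jb W) W = (t - cnj t)\<^sup>2 * vol p (jv p) q (jv q)"
    unfolding W pq Jb_wedge jv_qcoord vol_def[symmetric] vol_qcoord det4_def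
    by (simp_all add: algebra_simps power2_eq_square)
qed

locale quaternionic_frame =
  fixes p q :: cvec
  assumes spanning: "\<And>u. \<exists>x1 x2 x3 x4. u = qcoord p q x1 x2 x3 x4"
begin

lemma frame_vol_nonzero: "vol p (jv p) q (jv q) \<noteq> 0"
proof
  assume vanish: "vol p (jv p) q (jv q) = 0"
  obtain a1 a2 a3 a4 where a: "axis 1 1 = qcoord p q a1 a2 a3 a4" using spanning by blast
  obtain b1 b2 b3 b4 where b: "axis 2 1 = qcoord p q b1 b2 b3 b4" using spanning by blast
  obtain c1 c2 c3 c4 where c: "axis 3 1 = qcoord p q c1 c2 c3 c4" using spanning by blast
  obtain d1 d2 d3 d4 where d: "axis 4 1 = qcoord p q d1 d2 d3 d4" using spanning by blast
  have "vol (axis 1 1) (axis 2 1) (axis 3 1) (axis 4 1) = 1"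
    by (simp add: vol_def pf_polar_def wedge_def axis_def)
  then show False
    unfolding a b c d vol_qcoord vanish by simp
qed

lemma qcoord_eq_iff:
  "qcoord p q x1 x2 x3 x4 = qcoord p q y1 y2 y3 y4 \<longleftrightarrow> x1 = y1 \<and> x2 = y2 \<and> x3 = y3 \<and> x4 = y4"
proof
  assume eq: "qcoord p q x1 x2 x3 x4 = qcoord p q y1 y2 y3 y4"
  let ?e1 = "qcoord p q 1 0 0 0" and ?e2 = "qcoord p q 0 1 0 0"
  let ?e3 = "qcoord p q 0 0 1 0" and ?e4 = "qcoord p q 0 0 0 1"
  have "vol (qcoord p q x1 x2 x3 x4) ?e2 ?e3 ?e4 = vol (qcoord p q y1 y2 y3 y4) ?e2 ?e3 ?e4"
    "vol ?e1 (qcoord p q x1 x2 x3 x4) ?e3 ?e4 = vol ?e1 (qcoord p q y1 y2 y3 y4) ?e3 ?e4"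
    "vol ?e1 ?e2 (qcoord p q x1 x2 x3 x4) ?e4 = vol ?e1 ?e2 (qcoord p q y1 y2 y3 y4) ?e4"
    "vol ?e1 ?e2 ?e3 (qcoord p q x1 x2 x3 x4) = vol ?e1 ?e2 ?e3 (qcoord p q y1 y2 y3 y4)"
    unfolding eq by simp_all
  then show "x1 = y1 \<and> x2 = y2 \<and> x3 = y3 \<and> x4 = y4"
    unfolding vol_qcoord det4_def using frame_vol_nonzero by simp
qed simp

lemma half_touch_nonreal_pencil:
  assumes "Im t \<noteq> 0" and "\<beta> \<noteq> 0"
  shows "half_touch (bsc \<beta> (wedge (t *s p + q) (jv (cnj t *s p + q)))) (wedge p q)"
proof (rule half_touch_if_pairings)
  have "t - cnj t \<noteq> 0"
    using assms(1) by (simp add: complex_eq_iff)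
  then show "pf_polar (Jb (bsc \<beta> (wedge (t *s p + q) (jv (cnj t *s p + q)))))
      (bsc \<beta> (wedge (t *s p + q) (jv (cnj t *s p + q)))) \<noteq> 0"
    using assms(2) frame_vol_nonzero
    by (simp add: Jb_bsc pf_polar_bsc_left pf_polar_bsc_right nonreal_pencil_pairings)
qed (use frame_vol_nonzero in \<open>simp_all add: pf_bsc pf_wedge Jb_bsc pf_polar_bsc_left
      pf_polar_bsc_right nonreal_pencil_pairings pf_polar_Jb_wedge_self\<close>)

text \<open>Writing a point of both lines in the frame as a combination of u, u'j and
of p, q, the j-closure of its quaternionic line forces it onto [u] or [u'].\<close>
lemma sph_inter_nonreal_pencil:
  assumes "Im t \<noteq> 0" and "\<beta> \<noteq> 0"
  shows "sph (bsc \<beta> (wedge (t *s p + q) (jv (cnj t *s p + q)))) \<inter> sph (wedge p q)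
       = {hline (t *s p + q), hline (cnj t *s p + q)}"
proof -
  define u where "u = t *s p + q"
  define u' where "u' = cnj t *s p + q"
  define A where "A = bsc \<beta> (wedge u (jv u'))"
  have u: "u = qcoord p q t 0 1 0" and ju': "jv u' = qcoord p q 0 t 0 1"
    unfolding u_def u'_def by (simp_all add: qcoord_def jv_add jv_scale)
  have A_u: "A = wedge u (\<beta> *s jv u')" and A_u': "A = wedge (jv u') ((- \<beta>) *s u)"
    unfolding A_def by (simp_all add: vec_eq_iff wedge_def bsc_def algebra_simps)
  have pq_u: "wedge p q = wedge u ((- 1) *s p)" and pq_u': "wedge p q = wedge u' ((- 1) *s p)"
    unfolding u_def u'_def by (simp_all add: vec_eq_iff wedge_def algebra_simps)
  have A0: "A \<noteq> 0" and pq0: "wedge p q \<noteq> 0"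
    using half_touch_nonreal_pencil[OF assms]
    unfolding A_def u_def u'_def half_touch_def inQ_def by simp_all
  have qcoord_zero: "qcoord p q 0 0 0 0 = 0"
    by (simp add: qcoord_def)
  have u0: "u \<noteq> 0" and ju'0: "jv u' \<noteq> 0"
    unfolding u ju' qcoord_zero[symmetric] qcoord_eq_iff by simp_all
  then have u'0: "u' \<noteq> 0"
    using jv_zero by auto
  have "X \<in> {hline u, hline u'}" if X: "X \<in> sph A \<inter> sph (wedge p q)" for X
  proof -
    obtain v1 \<alpha> \<gamma> where v1: "v1 \<noteq> 0" "X = hline v1" "v1 = \<alpha> *s u + \<gamma> *s (\<beta> *s jv u')"
      using X A0 mem_sph_wedge[of X u "\<beta> *s jv u'"] unfolding A_u by blast
    obtain v2 \<delta> \<epsilon> where v2: "v2 \<noteq> 0" "X = hline v2" "v2 = \<delta> *s p + \<epsilon> *s q"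
      using X pq0 mem_sph_wedge[of X p q] by blast
    have "v2 \<in> hline v1"
      using self_in_hline[of v2] v1(2) v2(2) by simp
    then obtain a b where v2_v1: "v2 = a *s v1 + b *s jv v1"
      unfolding mem_hline by blast
    define \<gamma>' where "\<gamma>' = \<gamma> * \<beta>"
    have v1_u: "v1 = \<alpha> *s u + \<gamma>' *s jv u'"
      unfolding v1(3) \<gamma>'_def by (simp add: vector_smult_assoc mult.commute)
    have "qcoord p q \<delta> 0 \<epsilon> 0 = qcoord p q (a * (\<alpha> * t) - b * cnj (\<gamma>' * t))
      (a * (\<gamma>' * t) + b * cnj (\<alpha> * t)) (a * \<alpha> - b * cnj \<gamma>') (a * \<gamma>' + b * cnj \<alpha>)"
      using v2_v1 unfolding v2(3) v1_u u ju' by (simp add: qcoord_def jv_add jv_scale jv_jv vec_eq_iff algebra_simps)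
    then have e: "a * (\<gamma>' * t) + b * cnj (\<alpha> * t) = 0" "a * \<gamma>' + b * cnj \<alpha> = 0"
      unfolding qcoord_eq_iff by simp_all
    have "b * cnj \<alpha> * (cnj t - t) = 0"
      using e unfolding complex_cnj_mult by algebra
    moreover have "cnj t - t \<noteq> 0"
      using assms(1) by (simp add: complex_eq_iff)
    ultimately consider "\<alpha> = 0" | "b = 0"
      by auto
    then show ?thesis
    proof cases
      case 1
      then have "\<gamma>' \<noteq> 0" "v1 = \<gamma>' *s jv u'"
        using v1(1) v1_u by auto
      then show ?thesis
        using v1(2) by (simp add: hline_scale hline_jv)
    next
      case 2
      then have "a \<noteq> 0"
        using v2(1) v2_v1 by auto
      then have "\<gamma>' = 0"
        using e(2) 2 by simp
      then have "\<alpha> \<noteq> 0" "v1 = \<alpha> *s u"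
        using v1(1) v1_u by auto
      then show ?thesis
        using v1(2) by (simp add: hline_scale)
    qed
  qed
  moreover have "hline u \<in> sph A" "hline u \<in> sph (wedge p q)"
    unfolding A_u pq_u using u0 by (simp_all add: hline_in_sph)
  moreover have "hline u' \<in> sph A" "hline u' \<in> sph (wedge p q)"
    unfolding A_u' pq_u' using ju'0 u'0 hline_in_sph[of "jv u'"] by (simp_all add: hline_jv hline_in_sph)
  ultimately show ?thesis
    unfolding A_def u_def u'_def by blast
qed

end

lemma quaternionic_frameI:
  assumes "\<forall>u. \<exists>a\<in>hline p. \<exists>b\<in>hline q. u = a + b"
  shows "quaternionic_frame p q"
proof
  fix u
  obtain a b where "a \<in> hline p" "b \<in> hline q" "u = a + b"
    using assms by blast
  then show "\<exists>x1 x2 x3 x4. u = qcoord p q x1 x2 x3 x4"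
    unfolding mem_hline qcoord_def by (metis add.assoc)
qed

theorem mainTheorem14:
  fixes p q :: cvec
  assumes "hline p \<inter> hline q = {0}"
    and "\<forall>u. \<exists>a\<in>hline p. \<exists>b\<in>hline q. u = a + b"
    and "A = bsc a (wedge p (jv p)) + bsc b (wedge q (jv q))
             + bsc c (wedge (p + q) (jv (p + q)))"
    and "inQ A"
  shows "(\<exists>v d. v \<noteq> 0 \<and> A = bsc d (wedge v (jv v)) \<and>
            (hline v = hline p \<or> (\<exists>x::real. hline v = hline (complex_of_real x *s p + q))))
       \<or> (half_touch A (wedge p q) \<and>
          (\<exists>z. Im z \<noteq> 0 \<and>
             sph A \<inter> sph (wedge p q) = {hline (z *s p + q), hline (cnj z *s p + q)}))"
    (is "?circle \<or> _")
proof -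
  interpret quaternionic_frame p q
    using assms(2) by (rule quaternionic_frameI)
  have A0: "A \<noteq> 0"
    using assms(4) by (simp add: inQ_def)
  have abc: "a * b + a * c + b * c = 0"
    using assms(4) frame_vol_nonzero unfolding assms(3) inQ_def pf_circle_pencil by simp
  have circle: ?circle
    if A: "A = bsc d (wedge v (jv v))" and v: "v = p \<or> (\<exists>x::real. v = of_real x *s p + q)" for d v
  proof -
    have "v \<noteq> 0"
      using A A0 by (auto simp: wedge_zero bsc_zero)
    then show ?thesis
      using A v by blast
  qed
  consider \<beta> t where "A = bsc \<beta> (wedge (t *s p + q) (jv (cnj t *s p + q)))"
    | "A = bsc a (wedge p (jv p))"
    using circle_pencil_on_quadric[OF abc, where p=p and q=q] unfolding assms(3)[symmetric] by blast
  then show ?thesis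
  proof cases
    case (1 \<beta> t)
    then have "\<beta> \<noteq> 0"
      using A0 by (auto simp: bsc_zero)
    show ?thesis
    proof (cases "Im t = 0")
      case True
      then have "cnj t = t" and "t = of_real (Re t)"
        by (simp_all add: complex_eq_iff)
      then show ?thesis
        using circle[of \<beta> "of_real (Re t) *s p + q"] 1 by metis
    next
      case False
      then show ?thesis
        using half_touch_nonreal_pencil[OF False] sph_inter_nonreal_pencil[OF False] 1 \<open>\<beta> \<noteq> 0\<close>
        by auto
    qed
  next
    case 2
    then show ?thesis
      using circle by blast
  qed
qed

end
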